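(* Let $n\geqslant 2$, $P=\mathcal F(\Delta^{n-1})$, and $D$ a diagram on $P^*$ with values in finite sets whose associated sheaf $\mathcal D$ is inhabited and flabby. Let $I_0\in P$ satisfy $|D(I_0)|\geqslant 2$ and $|D(J)|=1$ for every nonempty $J\subsetneq I_0$. Write $D(I_0)=A_1\sqcup A_2$ with $A_1,A_2\neq\emptyset$. For $\varepsilon\in\{1,2\}$ define $D_\varepsilon(J)=D(J\geqslant I_0)^{-1}(A_\varepsilon)$ if $J\supseteq I_0$, and $D_\varepsilon(J)=D(J)$ otherwise, with structure maps the restrictions of those of $D$ (so $D_\varepsilon$ is a subdiagram of $D$). Then the sheaves $\mathcal D_1,\mathcal D_2$ associated to $D_1,D_2$ are inhabited and flabby.
   Context: $\mathcal F(\Delta^{n-1})$ is the poset of nonempty subsets of $[n]$ ordered by inclusion; $P^*$ is its reverse. A diagram on $P^*$ assigns finite sets $D(I)$ and maps $D(J\geqslant I)\colon D(J)\to D(I)$ for $I\subseteq J$, functorially. Open sets of the Alexandrov space $X_{P^*}$ are the lower ideals of $P$ (i.e. simplicial subcomplexes of $\Delta^{n-1}$). The associated sheaf assigns to nonempty open $U$ the set $\mathcal D(U)=\{(v_I)_{I\in U}\in\prod_{I\in U}D(I): D(J\geqslant I)(v_J)=v_I\text{ for } I\subseteq J \text{ in }U\}$ with projection restrictions. Inhabited: $\mathcal D(U)\neq\emptyset$ for all nonempty open $U$; flabby: every restriction map $\mathcal D(U)\to\mathcal D(V)$, $\emptyset\neq V\subseteq U$ open, is surjective. *)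

theory Defs
  imports "HOL-Library.FuncSet"
begin

text \<open>Face poset of the simplex on [n] = {1..n}: nonempty subsets of [n].\<close>
definition faces :: "nat \<Rightarrow> nat set set" where
  "faces n = {I. I \<subseteq> {1..n} \<and> I \<noteq> {}}"

definition is_diagram :: "nat \<Rightarrow> (nat set \<Rightarrow> 'a set) \<Rightarrow> (nat set \<Rightarrow> nat set \<Rightarrow> 'a \<Rightarrow> 'a) \<Rightarrow> bool" where
  "is_diagram n D Dm \<longleftrightarrow>
     (\<forall>I\<in>faces n. \<forall>J\<in>faces n. I \<subseteq> J \<longrightarrow> (\<forall>x\<in>D J. Dm J I x \<in> D I)) \<and>
     (\<forall>I\<in>faces n. \<forall>x\<in>D I. Dm I I x = x) \<and>
     (\<forall>I\<in>faces n. \<forall>J\<in>faces n. \<forall>K\<in>faces n. I \<subseteq> J \<longrightarrow> J \<subseteq> K \<longrightarrow>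
        (\<forall>x\<in>D K. Dm K I x = Dm J I (Dm K J x)))"

text \<open>Open sets of the Alexandrov space X_{P^*}: lower ideals of P.\<close>
definition open_faces :: "nat \<Rightarrow> nat set set \<Rightarrow> bool" where
  "open_faces n U \<longleftrightarrow> U \<subseteq> faces n \<and>
     (\<forall>J\<in>U. \<forall>I. I \<noteq> {} \<longrightarrow> I \<subseteq> J \<longrightarrow> I \<in> U)"

text \<open>Sections of the associated sheaf over U (compatible families, extensional outside U).\<close>
definition sections :: "(nat set \<Rightarrow> 'a set) \<Rightarrow> (nat set \<Rightarrow> nat set \<Rightarrow> 'a \<Rightarrow> 'a) \<Rightarrow> nat set set
    \<Rightarrow> (nat set \<Rightarrow> 'a) set" where
  "sections D Dm U = {v \<in> (\<Pi>\<^sub>E I\<in>U. D I). \<forall>I\<in>U. \<forall>J\<in>U. I \<subseteq> J \<longrightarrow> Dm J I (v J) = v I}"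

definition inhabited :: "nat \<Rightarrow> (nat set \<Rightarrow> 'a set) \<Rightarrow> (nat set \<Rightarrow> nat set \<Rightarrow> 'a \<Rightarrow> 'a) \<Rightarrow> bool" where
  "inhabited n D Dm \<longleftrightarrow> (\<forall>U. open_faces n U \<longrightarrow> U \<noteq> {} \<longrightarrow> sections D Dm U \<noteq> {})"

definition flabby :: "nat \<Rightarrow> (nat set \<Rightarrow> 'a set) \<Rightarrow> (nat set \<Rightarrow> nat set \<Rightarrow> 'a \<Rightarrow> 'a) \<Rightarrow> bool" where
  "flabby n D Dm \<longleftrightarrow> (\<forall>U V. open_faces n U \<longrightarrow> open_faces n V \<longrightarrow> V \<noteq> {} \<longrightarrow> V \<subseteq> U \<longrightarrow>
      (\<lambda>v. restrict v V) ` sections D Dm U = sections D Dm V)"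

definition subdiag :: "(nat set \<Rightarrow> 'a set) \<Rightarrow> (nat set \<Rightarrow> nat set \<Rightarrow> 'a \<Rightarrow> 'a) \<Rightarrow> nat set \<Rightarrow> 'a set
    \<Rightarrow> nat set \<Rightarrow> 'a set" where
  "subdiag D Dm I0 A J = (if I0 \<subseteq> J then {x \<in> D J. Dm J I0 x \<in> A} else D J)"

end

theory Submission
  imports Defs
begin

text \<open>
  A section of \<open>D\<^sub>\<epsilon>\<close> over an open set \<open>U\<close> is just a section of \<open>D\<close>, constrained to have its
  \<open>I\<^sub>0\<close>-component in \<open>A\<^sub>\<epsilon>\<close> when \<open>I\<^sub>0 \<in> U\<close>. So the only new point, for flabbiness and (with
  \<open>V = {}\<close>) for inhabitedness, is to extend a section \<open>v\<close> over an open \<open>V\<close> not containing \<open>I\<^sub>0\<close>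
  to an open \<open>U\<close> containing \<open>I\<^sub>0\<close>, with a prescribed value \<open>a \<in> D(I\<^sub>0)\<close> at \<open>I\<^sub>0\<close>. Since every
  proper face of \<open>I\<^sub>0\<close> carries a single element, \<open>a\<close> and its restrictions to the faces of \<open>I\<^sub>0\<close>
  are automatically compatible with \<open>v\<close>; the glued section over \<open>V\<close> and the faces of \<open>I\<^sub>0\<close>
  extends to \<open>U\<close> by flabbiness of \<open>D\<close>.
\<close>

lemma diagram_map_closed:
  "is_diagram n D Dm \<Longrightarrow> I \<in> faces n \<Longrightarrow> J \<in> faces n \<Longrightarrow> I \<subseteq> J \<Longrightarrow> x \<in> D J \<Longrightarrow> Dm J I x \<in> D I"
  unfolding is_diagram_def by blast

lemma diagram_id: "is_diagram n D Dm \<Longrightarrow> I \<in> faces n \<Longrightarrow> x \<in> D I \<Longrightarrow> Dm I I x = x"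
  unfolding is_diagram_def by blast

lemma diagram_comp:
  "is_diagram n D Dm \<Longrightarrow> I \<in> faces n \<Longrightarrow> J \<in> faces n \<Longrightarrow> K \<in> faces n \<Longrightarrow> I \<subseteq> J \<Longrightarrow> J \<subseteq> K \<Longrightarrow>
    x \<in> D K \<Longrightarrow> Dm K I x = Dm J I (Dm K J x)"
  unfolding is_diagram_def by blast

lemma sectionsI:
  assumes "\<And>J. J \<in> U \<Longrightarrow> v J \<in> D J" and "\<And>J. J \<notin> U \<Longrightarrow> v J = undefined"
    and "\<And>I J. I \<in> U \<Longrightarrow> J \<in> U \<Longrightarrow> I \<subseteq> J \<Longrightarrow> Dm J I (v J) = v I"
  shows "v \<in> sections D Dm U"
  using assms unfolding sections_def by blast

lemma sectionsD:
  assumes "v \<in> sections D Dm U"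
  shows sections_mem: "J \<in> U \<Longrightarrow> v J \<in> D J"
    and sections_undefined: "J \<notin> U \<Longrightarrow> v J = undefined"
    and sections_compatible: "I \<in> U \<Longrightarrow> J \<in> U \<Longrightarrow> I \<subseteq> J \<Longrightarrow> Dm J I (v J) = v I"
  using assms unfolding sections_def by auto

lemma restrict_sections: "u \<in> sections D Dm U \<Longrightarrow> V \<subseteq> U \<Longrightarrow> restrict u V \<in> sections D Dm V"
  unfolding sections_def by (auto simp: subset_iff)

lemma open_faces_Un: "open_faces n U \<Longrightarrow> open_faces n V \<Longrightarrow> open_faces n (U \<union> V)"
  unfolding open_faces_def by blast

lemma open_faces_below: "I \<in> faces n \<Longrightarrow> open_faces n {J. J \<noteq> {} \<and> J \<subseteq> I}"
  unfolding open_faces_def faces_def by auto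

lemma open_faces_below_subset: "open_faces n U \<Longrightarrow> I \<in> U \<Longrightarrow> {J. J \<noteq> {} \<and> J \<subseteq> I} \<subseteq> U"
  unfolding open_faces_def by blast

lemma sections_subdiag_outside:
  assumes "open_faces n U" "I0 \<notin> U" "I0 \<noteq> {}"
  shows "sections (subdiag D Dm I0 A) Dm U = sections D Dm U"
proof -
  have "subdiag D Dm I0 A J = D J" if "J \<in> U" for J
    using assms that unfolding open_faces_def subdiag_def by auto
  then have "(\<Pi>\<^sub>E J\<in>U. subdiag D Dm I0 A J) = (\<Pi>\<^sub>E J\<in>U. D J)"
    by (rule PiE_cong)
  then show ?thesis
    unfolding sections_def by simp
qed

lemma sections_subdiag_inside:
  assumes diag: "is_diagram n D Dm" and U: "open_faces n U" "I0 \<in> U"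
  shows "v \<in> sections (subdiag D Dm I0 A) Dm U \<longleftrightarrow> v \<in> sections D Dm U \<and> v I0 \<in> A"
proof
  assume v: "v \<in> sections (subdiag D Dm I0 A) Dm U"
  have "subdiag D Dm I0 A J \<subseteq> D J" for J
    unfolding subdiag_def by auto
  then have vD: "v \<in> sections D Dm U"
    using sectionsD[OF v] by (intro sectionsI) blast+
  have "I0 \<in> faces n"
    using U unfolding open_faces_def by blast
  moreover have "Dm I0 I0 (v I0) \<in> A"
    using sections_mem[OF v U(2)] unfolding subdiag_def by simp
  ultimately show "v \<in> sections D Dm U \<and> v I0 \<in> A"
    using vD diagram_id[OF diag] sections_mem[OF vD U(2)] by simp
next
  assume v: "v \<in> sections D Dm U \<and> v I0 \<in> A"
  then show "v \<in> sections (subdiag D Dm I0 A) Dm U"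
    using sectionsD[of v D Dm U] U(2) unfolding subdiag_def
    by (intro sectionsI) auto
qed

locale subsingleton_boundary =
  fixes n :: nat and D :: "nat set \<Rightarrow> 'a set" and Dm :: "nat set \<Rightarrow> nat set \<Rightarrow> 'a \<Rightarrow> 'a"
    and I0 :: "nat set"
  assumes diagram: "is_diagram n D Dm" and flabby_D: "flabby n D Dm" and face: "I0 \<in> faces n"
    and boundary_subsingleton: "\<And>J x y. J \<noteq> {} \<Longrightarrow> J \<subset> I0 \<Longrightarrow> x \<in> D J \<Longrightarrow> y \<in> D J \<Longrightarrow> x = y"
begin

lemma face_nonempty: "I0 \<noteq> {}"
  using face unfolding faces_def by blast

lemma glue_section_below:
  assumes V: "open_faces n V" "I0 \<notin> V"
    and v: "v \<in> sections D Dm V" and a: "a \<in> D I0"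
  shows "\<exists>w\<in>sections D Dm (V \<union> {J. J \<noteq> {} \<and> J \<subseteq> I0}). restrict w V = v \<and> w I0 = a"
proof -
  define L where "L = {J. J \<noteq> {} \<and> J \<subseteq> I0}"
  define w where "w J = (if J \<in> V then v J else if J \<in> L then Dm I0 J a else undefined)" for J
  have L: "L \<subseteq> faces n" "I0 \<in> L"
    using face unfolding L_def faces_def by auto
  have V_faces: "V \<subseteq> faces n" and V_lower: "\<And>I J. J \<in> V \<Longrightarrow> I \<noteq> {} \<Longrightarrow> I \<subseteq> J \<Longrightarrow> I \<in> V"
    using V(1) unfolding open_faces_def by blast+
  have w_mem: "w J \<in> D J" if "J \<in> V \<union> L" for J
    using that sections_mem[OF v] diagram_map_closed[OF diagram _ face _ a] L
    unfolding w_def L_def by auto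
  have "w \<in> sections D Dm (V \<union> L)"
  proof (rule sectionsI)
    fix I J assume IW: "I \<in> V \<union> L" and JW: "J \<in> V \<union> L" and IJ: "I \<subseteq> J"
    have faces: "I \<in> faces n" "J \<in> faces n"
      using IW JW V_faces L(1) by blast+
    then have "I \<noteq> {}"
      unfolding faces_def by blast
    consider "J \<in> V" | "J \<notin> V" "I \<in> V" | "J \<notin> V" "I \<notin> V"
      by blast
    then show "Dm J I (w J) = w I"
    proof cases
      case 1
      with V_lower \<open>I \<noteq> {}\<close> IJ have "I \<in> V" by blast
      with 1 show ?thesis
        using sections_compatible[OF v _ _ IJ] unfolding w_def by simp
    next
      case 2
      have "I \<subset> I0"
        using 2 JW IJ V(2) unfolding L_def by auto
      then show ?thesis
        using boundary_subsingleton \<open>I \<noteq> {}\<close> diagram_map_closed[OF diagram faces IJ w_mem[OF JW]] w_mem[OF IW]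
        by blast
    next
      case 3
      then have "I \<in> L" "J \<in> L"
        using IW JW by auto
      then show ?thesis
        using 3 diagram_comp[OF diagram faces face IJ _ a] unfolding w_def L_def by simp
    qed
  qed (fact w_mem, simp add: w_def)
  moreover have "restrict w V = v"
    using sections_undefined[OF v] by (auto simp: w_def)
  moreover have "w I0 = a"
    using V(2) L(2) diagram_id[OF diagram face a] unfolding w_def by simp
  ultimately show ?thesis
    unfolding L_def by blast
qed

lemma flabby_extend_with_value:
  assumes U: "open_faces n U" "I0 \<in> U"
    and V: "open_faces n V" "V \<subseteq> U" "I0 \<notin> V"
    and v: "v \<in> sections D Dm V" and a: "a \<in> D I0"
  shows "\<exists>u\<in>sections D Dm U. restrict u V = v \<and> u I0 = a"
proof -
  define W where "W = V \<union> {J. J \<noteq> {} \<and> J \<subseteq> I0}"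
  have "\<exists>w\<in>sections D Dm W. restrict w V = v \<and> w I0 = a"
    unfolding W_def by (rule glue_section_below[OF V(1,3) v a])
  then obtain w where w: "w \<in> sections D Dm W" "restrict w V = v" "w I0 = a"
    by blast
  have W: "open_faces n W" "W \<subseteq> U" "I0 \<in> W"
    unfolding W_def using open_faces_Un[OF V(1) open_faces_below[OF face]]
      open_faces_below_subset[OF U] V(2) face by (auto simp: faces_def)
  then have "(\<lambda>u. restrict u W) ` sections D Dm U = sections D Dm W"
    using flabby_D U(1) unfolding flabby_def by blast
  then obtain u where u: "u \<in> sections D Dm U" "restrict u W = w"
    using w(1) by (metis imageE)
  have "V \<subseteq> W"
    unfolding W_def by blast
  then have "restrict u V = restrict (restrict u W) V"
    by (simp add: Int_absorb1)
  with u(2) w(2) have "restrict u V = v"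
    by simp
  moreover have "u I0 = a"
    using u(2) w(3) W(3) by (metis restrict_apply')
  ultimately show ?thesis
    using u(1) by blast
qed

lemma inhabited_subdiag:
  assumes inh: "inhabited n D Dm" and a: "a \<in> A" "a \<in> D I0"
  shows "inhabited n (subdiag D Dm I0 A) Dm"
  unfolding inhabited_def
proof (intro allI impI)
  fix U assume U: "open_faces n U" "U \<noteq> {}"
  show "sections (subdiag D Dm I0 A) Dm U \<noteq> {}"
  proof (cases "I0 \<in> U")
    case True
    have "(\<lambda>_. undefined) \<in> sections D Dm {}"
      by (rule sectionsI) auto
    moreover have "open_faces n {}"
      unfolding open_faces_def by simp
    ultimately obtain u where "u \<in> sections D Dm U" "u I0 = a"
      using flabby_extend_with_value[OF U(1) True] a(2) by blast
    then show ?thesis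
      using sections_subdiag_inside[OF diagram U(1) True] a(1) by blast
  next
    case False
    then show ?thesis
      using inh U sections_subdiag_outside[OF U(1) False face_nonempty, of D Dm A]
      unfolding inhabited_def by simp
  qed
qed

lemma flabby_subdiag:
  assumes a: "a \<in> A" "a \<in> D I0"
  shows "flabby n (subdiag D Dm I0 A) Dm"
  unfolding flabby_def
proof (intro allI impI subset_antisym subsetI)
  fix U V w
  assume U: "open_faces n U" and V: "open_faces n V" "V \<noteq> {}" "V \<subseteq> U"
  let ?S = "sections (subdiag D Dm I0 A) Dm"
  have restrict_D: "(\<lambda>u. restrict u V) ` sections D Dm U = sections D Dm V"
    using flabby_D U V unfolding flabby_def by blast
  show "w \<in> ?S V" if "w \<in> (\<lambda>u. restrict u V) ` ?S U"
    using that restrict_sections V(3) by blast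
  show "w \<in> (\<lambda>u. restrict u V) ` ?S U" if v: "w \<in> ?S V"
  proof (cases "I0 \<in> V")
    case True
    with V(3) have "I0 \<in> U" by blast
    have "w \<in> sections D Dm V" "w I0 \<in> A"
      using sections_subdiag_inside[OF diagram V(1) True] v by auto
    then obtain u where "u \<in> sections D Dm U" "restrict u V = w"
      using restrict_D by (metis imageE)
    moreover have "u I0 = w I0"
      using \<open>restrict u V = w\<close> True by (metis restrict_apply')
    ultimately show ?thesis
      using sections_subdiag_inside[OF diagram U \<open>I0 \<in> U\<close>] \<open>w I0 \<in> A\<close> by auto
  next
    case False
    then have wD: "w \<in> sections D Dm V"
      using v sections_subdiag_outside[OF V(1) False face_nonempty, of D Dm A] by simp
    show ?thesis
    proof (cases "I0 \<in> U")
      case True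
      obtain u where "u \<in> sections D Dm U" "restrict u V = w" "u I0 = a"
        using flabby_extend_with_value[OF U True V(1,3) False wD a(2)] by blast
      then show ?thesis
        using sections_subdiag_inside[OF diagram U True] a(1) by auto
    next
      case False
      then show ?thesis
        using wD restrict_D sections_subdiag_outside[OF U False face_nonempty, of D Dm A] by simp
    qed
  qed
qed

end

theorem lemma6p2:
  fixes n :: nat and D :: "nat set \<Rightarrow> 'a set" and Dm :: "nat set \<Rightarrow> nat set \<Rightarrow> 'a \<Rightarrow> 'a"
    and I0 :: "nat set" and A1 A2 :: "'a set"
  assumes "n \<ge> 2"
    and "is_diagram n D Dm"
    and "\<forall>I\<in>faces n. finite (D I)"
    and "inhabited n D Dm" and "flabby n D Dm"
    and "I0 \<in> faces n"
    and "card (D I0) \<ge> 2"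
    and "\<forall>J. J \<noteq> {} \<longrightarrow> J \<subset> I0 \<longrightarrow> card (D J) = 1"
    and "D I0 = A1 \<union> A2" and "A1 \<inter> A2 = {}" and "A1 \<noteq> {}" and "A2 \<noteq> {}"
  shows "inhabited n (subdiag D Dm I0 A1) Dm \<and> flabby n (subdiag D Dm I0 A1) Dm \<and>
         inhabited n (subdiag D Dm I0 A2) Dm \<and> flabby n (subdiag D Dm I0 A2) Dm"
proof -
  text \<open>Only \<open>A\<^sub>\<epsilon> \<subseteq> D(I\<^sub>0)\<close> and \<open>A\<^sub>\<epsilon> \<noteq> {}\<close> matter below; the hypotheses on \<open>n\<close>, finiteness,
    \<open>|D(I\<^sub>0)| \<ge> 2\<close> and disjointness only describe the setting in which the lemma is applied.\<close>
  have "x = y" if "J \<noteq> {}" "J \<subset> I0" "x \<in> D J" "y \<in> D J" for J x y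
    using assms(8) that by (metis card_1_singletonE singletonD)
  then interpret subsingleton_boundary n D Dm I0
    using assms(2,5,6) by unfold_locales
  obtain a1 a2 where "a1 \<in> A1" "a2 \<in> A2"
    using assms(11,12) by blast
  moreover have "a1 \<in> D I0" "a2 \<in> D I0"
    using calculation assms(9) by auto
  ultimately show ?thesis
    using inhabited_subdiag[OF assms(4)] flabby_subdiag by blast
qed

end
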